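(* Let $f:(k+1)^V\to\mathbb{R}$ be $k$-submodular with multilinear extension $F$, and let $e_{i,j}\in\mathbb{R}^{n\times k}$ denote the standard basis vector with a $1$ in coordinate $(i,j)$. Then: (1) for every $x\in\mathcal P$ and every direction $d\in\mathbb{R}^{n\times k}$ with $d\ge 0$, the function $t\mapsto F(x+td)$ is concave on $\{t: x+td\in\mathcal P\}$; (2) for every $x\in\mathcal P$ and all $i_1\neq i_2\in[n]$, $j_1,j_2\in[k]$, the function $t\mapsto F(x+t(e_{i_1,j_1}-e_{i_2,j_2}))$ is convex on $\{t: x+t(e_{i_1,j_1}-e_{i_2,j_2})\in\mathcal P\}$; (3) for all $i\in[n]$, $j\in[k]$, $\partial F/\partial x_{i,j}$ does not depend on the coordinates $x_{i,1},\dots,x_{i,k}$ (it is constant when all $x_{i',j'}$ with $i'\neq i$ are fixed); (4) if $x,y\in\mathcal P$ with $x\le y$ entrywise, then $\frac{\partial F}{\partial x_{i,j}}(x)\ge\frac{\partial F}{\partial x_{i,j}}(y)$ for all $i\in[n]$, $j\in[k]$.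
   Context: Let $V=[n]=\{1,\dots,n\}$ and let $k\ge 1$ be an integer. Write $(k+1)^V$ for the set of $k$-tuples $S=(S_1,\dots,S_k)$ of pairwise disjoint subsets of $V$. For $S,T\in(k+1)^V$ let $S\sqcap T=(S_1\cap T_1,\dots,S_k\cap T_k)$ and let $S\sqcup T$ be the tuple whose $j$-th component is $(S_j\cup T_j)\setminus\bigcup_{l\neq j}(S_l\cup T_l)$. A function $f:(k+1)^V\to\mathbb{R}$ is $k$-submodular if $f(S)+f(T)\ge f(S\sqcap T)+f(S\sqcup T)$ for all $S,T\in(k+1)^V$. Let $\mathcal P=\{x\in[0,1]^{n\times k}:\sum_{j=1}^k x_{i,j}\le 1\ \forall i\in[n]\}$. The multilinear extension of $f$ is the polynomial $F(x)=\sum_{S\in(k+1)^V} f(S_1,\dots,S_k)\Big(\prod_{j\in[k]}\prod_{i\in S_j}x_{i,j}\Big)\prod_{i\in V\setminus\bigcup_j S_j}\Big(1-\sum_{j=1}^k x_{i,j}\Big)$, considered on $\mathcal P$. *)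

theory Defs
  imports "HOL-Analysis.Analysis"
begin

definition ktuples :: "nat \<Rightarrow> nat \<Rightarrow> (nat \<Rightarrow> nat set) set" where
  "ktuples n k = {S. (\<forall>j\<in>{1..k}. S j \<subseteq> {1..n}) \<and> (\<forall>j. j \<notin> {1..k} \<longrightarrow> S j = {})
      \<and> (\<forall>j\<in>{1..k}. \<forall>l\<in>{1..k}. j \<noteq> l \<longrightarrow> S j \<inter> S l = {})}"

definition kmeet :: "(nat \<Rightarrow> nat set) \<Rightarrow> (nat \<Rightarrow> nat set) \<Rightarrow> (nat \<Rightarrow> nat set)" where
  "kmeet S T = (\<lambda>j. S j \<inter> T j)"

definition kjoin :: "nat \<Rightarrow> (nat \<Rightarrow> nat set) \<Rightarrow> (nat \<Rightarrow> nat set) \<Rightarrow> (nat \<Rightarrow> nat set)" where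
  "kjoin k S T = (\<lambda>j. if j \<in> {1..k}
      then (S j \<union> T j) - (\<Union>l\<in>{1..k} - {j}. S l \<union> T l) else {})"

definition k_submodular :: "nat \<Rightarrow> nat \<Rightarrow> ((nat \<Rightarrow> nat set) \<Rightarrow> real) \<Rightarrow> bool" where
  "k_submodular n k f \<longleftrightarrow> (\<forall>S\<in>ktuples n k. \<forall>T\<in>ktuples n k.
      f S + f T \<ge> f (kmeet S T) + f (kjoin k S T))"

text \<open>Points of R^(n x k) are functions x :: nat => nat => real; only the coordinates
  x i j with i in {1..n}, j in {1..k} are relevant.\<close>
definition polytopeP :: "nat \<Rightarrow> nat \<Rightarrow> (nat \<Rightarrow> nat \<Rightarrow> real) set" where
  "polytopeP n k = {x. \<forall>i\<in>{1..n}. (\<forall>j\<in>{1..k}. 0 \<le> x i j \<and> x i j \<le> 1)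
      \<and> (\<Sum>j=1..k. x i j) \<le> 1}"

definition multilinear_ext :: "nat \<Rightarrow> nat \<Rightarrow> ((nat \<Rightarrow> nat set) \<Rightarrow> real) \<Rightarrow> (nat \<Rightarrow> nat \<Rightarrow> real) \<Rightarrow> real" where
  "multilinear_ext n k f x = (\<Sum>S\<in>ktuples n k.
      f S * (\<Prod>j\<in>{1..k}. \<Prod>i\<in>S j. x i j)
          * (\<Prod>i\<in>{1..n} - (\<Union>j\<in>{1..k}. S j). 1 - (\<Sum>j=1..k. x i j)))"

definition basis_vec :: "nat \<Rightarrow> nat \<Rightarrow> (nat \<Rightarrow> nat \<Rightarrow> real)" where
  "basis_vec i j = (\<lambda>a b. if a = i \<and> b = j then 1 else 0)"

definition line_pt :: "(nat \<Rightarrow> nat \<Rightarrow> real) \<Rightarrow> real \<Rightarrow> (nat \<Rightarrow> nat \<Rightarrow> real) \<Rightarrow> (nat \<Rightarrow> nat \<Rightarrow> real)" where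
  "line_pt x t d = (\<lambda>a b. x a b + t * d a b)"

definition partial :: "((nat \<Rightarrow> nat \<Rightarrow> real) \<Rightarrow> real) \<Rightarrow> nat \<Rightarrow> nat \<Rightarrow> (nat \<Rightarrow> nat \<Rightarrow> real) \<Rightarrow> real" where
  "partial G i j x = deriv (\<lambda>t. G (x(i := (x i)(j := t)))) (x i j)"

end

theory Submission imports Defs begin

text \<open>Encode a tuple S as the labelling \<sigma> of V with \<sigma> v = j for v \<in> S j and \<sigma> v = 0 for
  elements in no component. Then F x is the expectation of f under independent random labels,
  v receiving label j with probability x v j. Hence F is affine in each row x v, and
  \<partial>F/\<partial>x i j is the expected marginal gain f(\<tau>(i:=j)) - f(\<tau>(i:=0)) over the labels \<tau> of the
  other elements, which does not involve row i. Applying k-submodularity to \<tau>(v:=0, i:=j) and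
  \<tau>(v:=j', i:=0) shows that this gain can only drop when v receives a label; since increasing x
  moves probability from label 0 to positive labels, the partial derivatives are antitone in x.
  Along a direction d \<ge> 0 the derivative of t \<mapsto> F(x + t d) is \<Sum> d i j \<partial>F/\<partial>x i j, hence
  nonincreasing; along e i1 j1 - e i2 j2 it is \<partial>F/\<partial>x i1 j1 - \<partial>F/\<partial>x i2 j2, whose first term
  sees only row i2 decrease and whose second term sees only row i1 increase, hence it is
  nondecreasing.\<close>

section \<open>Expectations over random labellings\<close>

definition label_weight :: "nat \<Rightarrow> (nat \<Rightarrow> nat \<Rightarrow> real) \<Rightarrow> nat \<Rightarrow> nat \<Rightarrow> real" where
  "label_weight k x v a = (if a = 0 then 1 - (\<Sum>j=1..k. x v j) else x v a)"

definition label_mean ::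
    "nat \<Rightarrow> nat set \<Rightarrow> ((nat \<Rightarrow> nat) \<Rightarrow> real) \<Rightarrow> (nat \<Rightarrow> nat \<Rightarrow> real) \<Rightarrow> real" where
  "label_mean k W h x = (\<Sum>\<sigma>\<in>W \<rightarrow>\<^sub>E {0..k}. h \<sigma> * (\<Prod>v\<in>W. label_weight k x v (\<sigma> v)))"

definition marginal ::
    "nat \<Rightarrow> nat set \<Rightarrow> ((nat \<Rightarrow> nat) \<Rightarrow> real) \<Rightarrow> nat \<Rightarrow> nat \<Rightarrow> (nat \<Rightarrow> nat \<Rightarrow> real) \<Rightarrow> real" where
  "marginal k W h i j x = label_mean k (W - {i}) (\<lambda>\<tau>. h (\<tau>(i := j)) - h (\<tau>(i := 0))) x"

definition row_in_simplex :: "nat \<Rightarrow> (nat \<Rightarrow> nat \<Rightarrow> real) \<Rightarrow> nat \<Rightarrow> bool" where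
  "row_in_simplex k x v \<longleftrightarrow> (\<forall>j\<in>{1..k}. 0 \<le> x v j) \<and> (\<Sum>j=1..k. x v j) \<le> 1"

lemma label_weight_nonneg: "row_in_simplex k x v \<Longrightarrow> a \<le> k \<Longrightarrow> 0 \<le> label_weight k x v a"
  unfolding row_in_simplex_def label_weight_def by auto

lemma sum_label_weight:
  "(\<Sum>a=0..k. label_weight k x v a * c a) = c 0 + (\<Sum>j=1..k. x v j * (c j - c 0))"
proof -
  have "(\<Sum>a=0..k. label_weight k x v a * c a) = (1 - (\<Sum>j=1..k. x v j)) * c 0 + (\<Sum>j=1..k. x v j * c j)"
    by (simp add: sum.atLeast_Suc_atMost label_weight_def)
  then show ?thesis
    by (simp add: sum_subtractf sum_distrib_right sum_distrib_left algebra_simps)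
qed

lemma label_mean_insert:
  assumes "finite W" "i \<notin> W"
  shows "label_mean k (insert i W) h x
    = (\<Sum>a=0..k. label_weight k x i a * label_mean k W (\<lambda>\<tau>. h (\<tau>(i := a))) x)"
proof -
  have weights: "(\<Prod>v\<in>insert i W. label_weight k x v ((\<tau>(i := a)) v))
      = label_weight k x i a * (\<Prod>v\<in>W. label_weight k x v (\<tau> v))" for a \<tau>
  proof -
    have "(\<Prod>v\<in>W. label_weight k x v ((\<tau>(i := a)) v)) = (\<Prod>v\<in>W. label_weight k x v (\<tau> v))"
      using assms(2) by (intro prod.cong) auto
    then show ?thesis
      using assms by simp
  qed
  have "label_mean k (insert i W) h x = (\<Sum>(a, \<tau>)\<in>{0..k} \<times> (W \<rightarrow>\<^sub>E {0..k}).
      h (\<tau>(i := a)) * (\<Prod>v\<in>insert i W. label_weight k x v ((\<tau>(i := a)) v)))"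
    unfolding label_mean_def PiE_insert_eq
    by (subst sum.reindex [OF inj_combinator [OF assms(2)]]) (simp add: case_prod_unfold)
  also have "\<dots> = (\<Sum>a=0..k. \<Sum>\<tau>\<in>W \<rightarrow>\<^sub>E {0..k}.
      label_weight k x i a * (h (\<tau>(i := a)) * (\<Prod>v\<in>W. label_weight k x v (\<tau> v))))"
    unfolding sum.cartesian_product [symmetric] weights by (simp add: ac_simps)
  finally show ?thesis
    by (simp add: label_mean_def sum_distrib_left)
qed

lemma label_mean_cong:
  assumes "\<forall>v\<in>W. \<forall>j\<in>{1..k}. x v j = y v j"
  shows "label_mean k W h x = label_mean k W h y"
  unfolding label_mean_def label_weight_def using assms
  by (intro sum.cong refl arg_cong [where f = "\<lambda>u. _ * u"] prod.cong) (auto simp: PiE_iff)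

lemma label_mean_diff:
  "label_mean k W (\<lambda>\<tau>. h1 \<tau> - h2 \<tau>) x = label_mean k W h1 x - label_mean k W h2 x"
  by (simp add: label_mean_def sum_subtractf left_diff_distrib)

lemma label_mean_mono:
  assumes "\<forall>v\<in>W. row_in_simplex k x v" "\<And>\<tau>. h1 \<tau> \<le> h2 \<tau>"
  shows "label_mean k W h1 x \<le> label_mean k W h2 x"
  unfolding label_mean_def using assms
  by (intro sum_mono mult_right_mono prod_nonneg label_weight_nonneg) (auto simp: PiE_iff)

lemma label_mean_antimono:
  assumes "finite W" "\<forall>v\<in>W. row_in_simplex k x v" "\<forall>v\<in>W. row_in_simplex k y v"
    and "\<forall>v\<in>W. \<forall>j\<in>{1..k}. x v j \<le> y v j"
    and "\<forall>\<tau>. \<forall>v\<in>W. \<forall>j\<in>{1..k}. h (\<tau>(v := j)) \<le> h (\<tau>(v := 0))"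
  shows "label_mean k W h y \<le> label_mean k W h x"
  using assms
proof (induction W arbitrary: h rule: finite_induct)
  case empty
  then show ?case
    by (simp add: label_mean_def)
next
  case (insert i W)
  define c where "c z a = label_mean k W (\<lambda>\<tau>. h (\<tau>(i := a))) z" for z a
  have IH: "c y a \<le> c x a" for a
    unfolding c_def
  proof (rule insert.IH)
    show "\<forall>\<tau>. \<forall>v\<in>W. \<forall>j\<in>{1..k}. h (\<tau>(v := j, i := a)) \<le> h (\<tau>(v := 0, i := a))"
      using insert.hyps(2) insert.prems(4) by (metis fun_upd_twist insertCI)
  qed (use insert.prems in auto)
  have labelled_le_unlabelled: "c y j \<le> c y 0" if "j \<in> {1..k}" for j
    unfolding c_def using insert.prems(2,4) that by (intro label_mean_mono) blast+
  have "label_mean k (insert i W) h y = c y 0 + (\<Sum>j=1..k. y i j * (c y j - c y 0))"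
    using insert.hyps by (simp add: label_mean_insert sum_label_weight c_def)
  also have "\<dots> \<le> c y 0 + (\<Sum>j=1..k. x i j * (c y j - c y 0))"
    using labelled_le_unlabelled insert.prems(3)
    by (intro add_left_mono sum_mono mult_right_mono_neg) auto
  also have "\<dots> = (\<Sum>a=0..k. label_weight k x i a * c y a)"
    by (simp add: sum_label_weight)
  also have "\<dots> \<le> (\<Sum>a=0..k. label_weight k x i a * c x a)"
    using insert.prems(1) by (intro sum_mono mult_left_mono IH label_weight_nonneg) auto
  also have "\<dots> = label_mean k (insert i W) h x"
    using insert.hyps by (simp add: label_mean_insert c_def)
  finally show ?case .
qed

lemma marginal_insert_self:
  assumes "i \<notin> W"
  shows "marginal k (insert i W) h i j x
    = label_mean k W (\<lambda>\<tau>. h (\<tau>(i := j))) x - label_mean k W (\<lambda>\<tau>. h (\<tau>(i := 0))) x"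
  using assms by (simp add: marginal_def label_mean_diff)

lemma marginal_insert:
  assumes "finite W" "i \<notin> W" "v \<in> W"
  shows "marginal k (insert i W) h v j x
    = (\<Sum>a=0..k. label_weight k x i a * marginal k W (\<lambda>\<tau>. h (\<tau>(i := a))) v j x)"
proof -
  have "v \<noteq> i" "insert i W - {v} = insert i (W - {v})"
    using assms by auto
  then show ?thesis
    using assms by (simp add: marginal_def label_mean_insert fun_upd_twist)
qed

lemma marginal_cong:
  assumes "\<forall>v\<in>W - {i}. \<forall>j'\<in>{1..k}. x v j' = y v j'"
  shows "marginal k W h i j x = marginal k W h i j y"
  unfolding marginal_def using assms by (rule label_mean_cong)

definition diminishing_returns :: "nat \<Rightarrow> nat set \<Rightarrow> ((nat \<Rightarrow> nat) \<Rightarrow> real) \<Rightarrow> bool" where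
  "diminishing_returns k W h \<longleftrightarrow>
    (\<forall>\<tau> i v j j'. i \<in> W \<longrightarrow> v \<in> W - {i} \<longrightarrow> j \<in> {1..k} \<longrightarrow> j' \<in> {1..k} \<longrightarrow>
      h (\<tau>(v := j', i := j)) - h (\<tau>(v := j', i := 0))
        \<le> h (\<tau>(v := 0, i := j)) - h (\<tau>(v := 0, i := 0)))"

lemma marginal_antimono:
  assumes "finite W" "i \<in> W" "j \<in> {1..k}" "diminishing_returns k W h"
    and "\<forall>v\<in>W - {i}. row_in_simplex k x v" "\<forall>v\<in>W - {i}. row_in_simplex k y v"
    and "\<forall>v\<in>W - {i}. \<forall>j'\<in>{1..k}. x v j' \<le> y v j'"
  shows "marginal k W h i j y \<le> marginal k W h i j x"
  unfolding marginal_def using assms unfolding diminishing_returns_def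
  by (intro label_mean_antimono) auto

section \<open>Derivatives along lines\<close>

definition dir_weight :: "nat \<Rightarrow> (nat \<Rightarrow> nat \<Rightarrow> real) \<Rightarrow> nat \<Rightarrow> nat \<Rightarrow> real" where
  "dir_weight k d v a = (if a = 0 then - (\<Sum>j=1..k. d v j) else d v a)"

lemma label_weight_line_pt:
  "label_weight k (line_pt x t d) v a = label_weight k x v a + t * dir_weight k d v a"
  by (simp add: label_weight_def dir_weight_def line_pt_def sum.distrib sum_distrib_left)

lemma sum_dir_weight:
  "(\<Sum>a=0..k. dir_weight k d v a * c a) = (\<Sum>j=1..k. d v j * (c j - c 0))"
proof -
  have "(\<Sum>a=0..k. dir_weight k d v a * c a) = - (\<Sum>j=1..k. d v j) * c 0 + (\<Sum>j=1..k. d v j * c j)"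
    by (simp add: sum.atLeast_Suc_atMost dir_weight_def)
  then show ?thesis
    by (simp add: sum_subtractf sum_distrib_right sum_distrib_left algebra_simps)
qed

lemma has_real_derivative_label_mean_line_pt:
  assumes "finite W"
  shows "((\<lambda>t. label_mean k W h (line_pt x t d)) has_real_derivative
     (\<Sum>v\<in>W. \<Sum>j=1..k. d v j * marginal k W h v j (line_pt x t d))) (at t)"
  using assms
proof (induction W arbitrary: h t rule: finite_induct)
  case empty
  then show ?case
    by (simp add: label_mean_def)
next
  case (insert i W)
  let ?y = "line_pt x t d"
  define c where "c a t = label_mean k W (\<lambda>\<tau>. h (\<tau>(i := a))) (line_pt x t d)" for a t
  define c' where
    "c' a t = (\<Sum>v\<in>W. \<Sum>j=1..k. d v j * marginal k W (\<lambda>\<tau>. h (\<tau>(i := a))) v j (line_pt x t d))"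
    for a t
  have "label_mean k (insert i W) h (line_pt x s d)
      = (\<Sum>a=0..k. (label_weight k x i a + s * dir_weight k d i a) * c a s)" for s
    using insert.hyps by (simp add: label_mean_insert label_weight_line_pt c_def)
  moreover have "((\<lambda>s. \<Sum>a=0..k. (label_weight k x i a + s * dir_weight k d i a) * c a s)
      has_real_derivative
      (\<Sum>a=0..k. dir_weight k d i a * c a t + label_weight k ?y i a * c' a t)) (at t)"
  proof -
    have "(c a has_real_derivative c' a t) (at t)" for a
      unfolding c_def c'_def by (rule insert.IH)
    then show ?thesis
      unfolding label_weight_line_pt by (intro DERIV_sum) (auto intro!: derivative_eq_intros)
  qed
  moreover have "(\<Sum>a=0..k. dir_weight k d i a * c a t) = (\<Sum>j=1..k. d i j * marginal k (insert i W) h i j ?y)"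
    using insert.hyps by (simp add: sum_dir_weight marginal_insert_self c_def)
  moreover have "(\<Sum>a=0..k. label_weight k ?y i a * c' a t)
      = (\<Sum>v\<in>W. \<Sum>j=1..k. d v j * marginal k (insert i W) h v j ?y)"
    using insert.hyps
    by (simp add: c'_def marginal_insert sum_distrib_left ac_simps sum.swap [of _ "{0..k}"])
  ultimately show ?case
    using insert.hyps by (simp add: sum.distrib)
qed

lemma partial_label_mean:
  assumes "finite V" "i \<in> V" "j \<in> {1..k}"
  shows "partial (label_mean k V h) i j x = marginal k V h i j x"
proof -
  define W where "W = V - {i}"
  have V: "V = insert i W" "i \<notin> W" "finite W"
    using assms unfolding W_def by auto
  define c where "c a = label_mean k W (\<lambda>\<tau>. h (\<tau>(i := a))) x" for a
  define A where "A = c 0 + (\<Sum>j'\<in>{1..k} - {j}. x i j' * (c j' - c 0))"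
  have affine: "label_mean k V h (x(i := (x i)(j := t))) = A + t * (c j - c 0)" for t
  proof -
    let ?x = "x(i := (x i)(j := t))"
    have "label_mean k W (\<lambda>\<tau>. h (\<tau>(i := a))) ?x = c a" for a
      unfolding c_def using V(2) by (intro label_mean_cong) auto
    then have "label_mean k V h ?x = c 0 + (\<Sum>j'=1..k. ?x i j' * (c j' - c 0))"
      using V by (simp add: label_mean_insert sum_label_weight)
    also have "\<dots> = A + t * (c j - c 0)"
      using assms(3) unfolding A_def by (simp add: sum.remove [of _ j])
    finally show ?thesis .
  qed
  have "((\<lambda>t. A + t * (c j - c 0)) has_real_derivative (c j - c 0)) (at (x i j))"
    by (auto intro!: derivative_eq_intros)
  then have "partial (label_mean k V h) i j x = c j - c 0"
    unfolding partial_def affine by (rule DERIV_imp_deriv)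
  also have "\<dots> = marginal k V h i j x"
    using V by (simp add: c_def marginal_insert_self)
  finally show ?thesis .
qed

section \<open>Concavity and convexity along lines through the polytope\<close>

lemma row_in_simplex_if_polytopeP: "x \<in> polytopeP n k \<Longrightarrow> v \<in> {1..n} \<Longrightarrow> row_in_simplex k x v"
  unfolding polytopeP_def row_in_simplex_def by auto

lemma polytopeP_convex_combination:
  assumes "x \<in> polytopeP n k" "y \<in> polytopeP n k" "0 \<le> u" "0 \<le> v" "u + v = 1"
  shows "(\<lambda>a b. u * x a b + v * y a b) \<in> polytopeP n k"
  unfolding polytopeP_def
proof (intro CollectI ballI conjI)
  fix i j assume "i \<in> {1..n}" "j \<in> {1..k}"
  then have "0 \<le> x i j" "x i j \<le> 1" "0 \<le> y i j" "y i j \<le> 1"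
    using assms(1,2) unfolding polytopeP_def by auto
  then show "0 \<le> u * x i j + v * y i j" "u * x i j + v * y i j \<le> 1"
    using assms(3-5) by (auto intro: convex_bound_le)
next
  fix i assume "i \<in> {1..n}"
  then have "(\<Sum>j=1..k. x i j) \<le> 1" "(\<Sum>j=1..k. y i j) \<le> 1"
    using assms(1,2) unfolding polytopeP_def by auto
  then show "(\<Sum>j=1..k. u * x i j + v * y i j) \<le> 1"
    using assms(3-5) by (simp add: sum.distrib flip: sum_distrib_left) (rule convex_bound_le)
qed

lemma connected_line_pt_polytopeP: "connected {t. line_pt x t d \<in> polytopeP n k}"
proof (rule convex_connected, rule convexI)
  fix s t u v :: real
  assume "s \<in> {t. line_pt x t d \<in> polytopeP n k}" "t \<in> {t. line_pt x t d \<in> polytopeP n k}"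
    and "0 \<le> u" "0 \<le> v" "u + v = 1"
  moreover have "line_pt x (u * s + v * t) d = (\<lambda>a b. u * line_pt x s d a b + v * line_pt x t d a b)"
  proof -
    have v: "v = 1 - u"
      using \<open>u + v = 1\<close> by simp
    show ?thesis
      unfolding v line_pt_def by (intro ext) algebra
  qed
  ultimately show "u *\<^sub>R s + v *\<^sub>R t \<in> {t. line_pt x t d \<in> polytopeP n k}"
    by (simp add: polytopeP_convex_combination)
qed

lemma concave_on_label_mean_line_pt:
  assumes "diminishing_returns k {1..n} h" "\<forall>i\<in>{1..n}. \<forall>j\<in>{1..k}. 0 \<le> d i j"
  shows "concave_on {t. line_pt x t d \<in> polytopeP n k} (\<lambda>t. label_mean k {1..n} h (line_pt x t d))"
proof -
  define D where "D t = (\<Sum>v\<in>{1..n}. \<Sum>j=1..k. d v j * marginal k {1..n} h v j (line_pt x t d))" for t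
  have "convex_on {t. line_pt x t d \<in> polytopeP n k} (\<lambda>t. - label_mean k {1..n} h (line_pt x t d))"
  proof (rule convex_on_realI [where f' = "\<lambda>t. - D t", OF connected_line_pt_polytopeP])
    show "((\<lambda>t. - label_mean k {1..n} h (line_pt x t d)) has_real_derivative - D t) (at t)" for t
      unfolding D_def by (intro DERIV_minus has_real_derivative_label_mean_line_pt) simp
  next
    fix s t
    assume "s \<in> {t. line_pt x t d \<in> polytopeP n k}" "t \<in> {t. line_pt x t d \<in> polytopeP n k}" "s \<le> t"
    then have "D t \<le> D s"
      unfolding D_def using assms
      by (intro sum_mono mult_left_mono marginal_antimono)
        (auto simp: line_pt_def row_in_simplex_if_polytopeP intro: mult_right_mono)
    then show "- D s \<le> - D t"
      by simp
  qed
  then show ?thesis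
    by (simp add: concave_on_def)
qed

lemma sum_basis_vec:
  assumes "finite V" "finite K" "i \<in> V" "j \<in> K"
  shows "(\<Sum>v\<in>V. \<Sum>l\<in>K. basis_vec i j v l * D v l) = D i j"
proof -
  have "basis_vec i j v l * D v l = (if v = i then if l = j then D i j else 0 else 0)" for v l
    by (simp add: basis_vec_def)
  then show ?thesis
    using assms by (simp add: sum.If_cases)
qed

lemma convex_on_label_mean_line_pt_exchange:
  assumes "diminishing_returns k {1..n} h" "i1 \<in> {1..n}" "i2 \<in> {1..n}" "i1 \<noteq> i2"
    and "j1 \<in> {1..k}" "j2 \<in> {1..k}"
    and d: "d = (\<lambda>a b. basis_vec i1 j1 a b - basis_vec i2 j2 a b)"
  shows "convex_on {t. line_pt x t d \<in> polytopeP n k} (\<lambda>t. label_mean k {1..n} h (line_pt x t d))"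
proof -
  define M where "M t i j = marginal k {1..n} h i j (line_pt x t d)" for t i j
  have derivative: "(\<Sum>v\<in>{1..n}. \<Sum>j=1..k. d v j * M t v j) = M t i1 j1 - M t i2 j2" for t
    using assms(2,3,5,6)
    by (simp add: d left_diff_distrib sum_subtractf sum_basis_vec)
  show ?thesis
  proof (rule convex_on_realI [where f' = "\<lambda>t. M t i1 j1 - M t i2 j2", OF connected_line_pt_polytopeP])
    show "((\<lambda>t. label_mean k {1..n} h (line_pt x t d)) has_real_derivative M t i1 j1 - M t i2 j2) (at t)" for t
      using has_real_derivative_label_mean_line_pt [of "{1..n}" k h x d t]
      unfolding M_def [symmetric] derivative by simp
  next
    fix s t
    assume st: "s \<in> {t. line_pt x t d \<in> polytopeP n k}" "t \<in> {t. line_pt x t d \<in> polytopeP n k}"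
      "s \<le> t"
    have "M s i1 j1 \<le> M t i1 j1"
      unfolding M_def using assms(1,2,5) st
      by (intro marginal_antimono) (auto simp: d line_pt_def basis_vec_def row_in_simplex_if_polytopeP)
    moreover have "M t i2 j2 \<le> M s i2 j2"
      unfolding M_def using assms(1,3,4,6) st
      by (intro marginal_antimono) (auto simp: d line_pt_def basis_vec_def row_in_simplex_if_polytopeP)
    ultimately show "M s i1 j1 - M s i2 j2 \<le> M t i1 j1 - M t i2 j2"
      by simp
  qed
qed

section \<open>Tuples as labellings\<close>

definition tuple_of_labels :: "nat \<Rightarrow> nat \<Rightarrow> (nat \<Rightarrow> nat) \<Rightarrow> (nat \<Rightarrow> nat set)" where
  "tuple_of_labels n k \<sigma> = (\<lambda>l. if l \<in> {1..k} then {v\<in>{1..n}. \<sigma> v = l} else {})"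

definition labels_of_tuple :: "nat \<Rightarrow> nat \<Rightarrow> (nat \<Rightarrow> nat set) \<Rightarrow> (nat \<Rightarrow> nat)" where
  "labels_of_tuple n k S = (\<lambda>v. if v \<in> {1..n}
     then if \<exists>l\<in>{1..k}. v \<in> S l then THE l. l \<in> {1..k} \<and> v \<in> S l else 0 else undefined)"

lemma labels_of_tuple_eq:
  assumes "S \<in> ktuples n k" "l \<in> {1..k}" "v \<in> S l"
  shows "labels_of_tuple n k S v = l"
proof -
  have "v \<in> {1..n}"
    using assms unfolding ktuples_def by blast
  moreover have "(THE l. l \<in> {1..k} \<and> v \<in> S l) = l"
  proof (rule the_equality)
    show "l' = l" if "l' \<in> {1..k} \<and> v \<in> S l'" for l'
      using assms that unfolding ktuples_def by blast
  qed (use assms in simp)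
  ultimately show ?thesis
    using assms unfolding labels_of_tuple_def by auto
qed

lemma tuple_of_labels_in_ktuples: "tuple_of_labels n k \<sigma> \<in> ktuples n k"
  unfolding tuple_of_labels_def ktuples_def by auto

lemma labels_of_tuple_of_labels:
  assumes "\<sigma> \<in> {1..n} \<rightarrow>\<^sub>E {0..k}"
  shows "labels_of_tuple n k (tuple_of_labels n k \<sigma>) = \<sigma>"
proof
  fix v
  consider "v \<notin> {1..n}" | "v \<in> {1..n}" "\<sigma> v = 0" | "v \<in> {1..n}" "\<sigma> v \<in> {1..k}"
    using assms by (cases "\<sigma> v = 0") (auto simp: PiE_iff)
  then show "labels_of_tuple n k (tuple_of_labels n k \<sigma>) v = \<sigma> v"
  proof cases
    case 1
    then show ?thesis
      using PiE_arb [OF assms 1] by (auto simp: labels_of_tuple_def)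
  next
    case 2
    then show ?thesis
      by (auto simp: labels_of_tuple_def tuple_of_labels_def)
  next
    case 3
    then show ?thesis
      by (intro labels_of_tuple_eq tuple_of_labels_in_ktuples) (auto simp: tuple_of_labels_def)
  qed
qed

lemma tuple_of_labels_of_tuple:
  assumes "S \<in> ktuples n k"
  shows "tuple_of_labels n k (labels_of_tuple n k S) = S"
proof
  fix l
  show "tuple_of_labels n k (labels_of_tuple n k S) l = S l"
  proof (cases "l \<in> {1..k}")
    case True
    have "v \<in> S l \<longleftrightarrow> v \<in> {1..n} \<and> labels_of_tuple n k S v = l" for v
    proof
      assume "v \<in> S l"
      then show "v \<in> {1..n} \<and> labels_of_tuple n k S v = l"
        using assms True labels_of_tuple_eq unfolding ktuples_def by blast
    next
      assume v: "v \<in> {1..n} \<and> labels_of_tuple n k S v = l"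
      then obtain l' where "l' \<in> {1..k}" "v \<in> S l'"
        using True unfolding labels_of_tuple_def by (auto split: if_splits)
      then show "v \<in> S l"
        using v labels_of_tuple_eq [OF assms] by blast
    qed
    then show ?thesis
      using True unfolding tuple_of_labels_def by auto
  next
    case False
    then show ?thesis
      using assms unfolding tuple_of_labels_def ktuples_def by auto
  qed
qed

lemma labels_of_tuple_in_PiE:
  assumes "S \<in> ktuples n k"
  shows "labels_of_tuple n k S \<in> {1..n} \<rightarrow>\<^sub>E {0..k}"
proof -
  have "labels_of_tuple n k S v \<in> {0..k}" if "v \<in> {1..n}" for v
  proof (cases "\<exists>l\<in>{1..k}. v \<in> S l")
    case True
    then show ?thesis
      using labels_of_tuple_eq [OF assms] by fastforce
  qed (use that in \<open>simp add: labels_of_tuple_def\<close>)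
  then show ?thesis
    by (auto simp: PiE_iff extensional_def labels_of_tuple_def)
qed

lemma bij_betw_tuple_of_labels: "bij_betw (tuple_of_labels n k) ({1..n} \<rightarrow>\<^sub>E {0..k}) (ktuples n k)"
  by (intro bij_betw_byWitness [where f' = "labels_of_tuple n k"] ballI image_subsetI
      labels_of_tuple_of_labels tuple_of_labels_of_tuple tuple_of_labels_in_ktuples
      labels_of_tuple_in_PiE)

lemma prod_label_weight:
  assumes "\<sigma> \<in> {1..n} \<rightarrow>\<^sub>E {0..k}"
  shows "(\<Prod>j\<in>{1..k}. \<Prod>i\<in>tuple_of_labels n k \<sigma> j. x i j)
      * (\<Prod>i\<in>{1..n} - (\<Union>j\<in>{1..k}. tuple_of_labels n k \<sigma> j). 1 - (\<Sum>j=1..k. x i j))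
    = (\<Prod>v\<in>{1..n}. label_weight k x v (\<sigma> v))"
proof -
  let ?A = "{1..n} \<inter> {v. \<sigma> v \<noteq> 0}" and ?B = "{1..n} - {v. \<sigma> v \<noteq> 0}"
  have labelled: "(\<Union>j\<in>{1..k}. tuple_of_labels n k \<sigma> j) = ?A"
    using assms unfolding tuple_of_labels_def by fastforce
  have "(\<Prod>j\<in>{1..k}. \<Prod>i\<in>tuple_of_labels n k \<sigma> j. x i j) = (\<Prod>i\<in>?A. label_weight k x i (\<sigma> i))"
  proof -
    have "(\<Prod>j\<in>{1..k}. \<Prod>i\<in>tuple_of_labels n k \<sigma> j. x i j)
        = (\<Prod>j\<in>{1..k}. \<Prod>i\<in>tuple_of_labels n k \<sigma> j. label_weight k x i (\<sigma> i))"
      by (intro prod.cong refl) (auto simp: tuple_of_labels_def label_weight_def split: if_splits)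
    also have "\<dots> = (\<Prod>i\<in>?A. label_weight k x i (\<sigma> i))"
      unfolding labelled [symmetric]
      by (rule prod.UNION_disjoint [symmetric]) (auto simp: tuple_of_labels_def)
    finally show ?thesis .
  qed
  moreover have "(\<Prod>i\<in>{1..n} - (\<Union>j\<in>{1..k}. tuple_of_labels n k \<sigma> j). 1 - (\<Sum>j=1..k. x i j))
      = (\<Prod>i\<in>?B. label_weight k x i (\<sigma> i))"
    unfolding labelled by (intro prod.cong) (auto simp: label_weight_def)
  ultimately show ?thesis
    using prod.Int_Diff [OF finite_atLeastAtMost, of "\<lambda>v. label_weight k x v (\<sigma> v)" 1 n "{v. \<sigma> v \<noteq> 0}"]
    by (simp only:)
qed

lemma multilinear_ext_eq_label_mean:
  "multilinear_ext n k f = label_mean k {1..n} (\<lambda>\<sigma>. f (tuple_of_labels n k \<sigma>))"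
proof
  fix x
  show "multilinear_ext n k f x = label_mean k {1..n} (\<lambda>\<sigma>. f (tuple_of_labels n k \<sigma>)) x"
    unfolding multilinear_ext_def label_mean_def
      sum.reindex_bij_betw [OF bij_betw_tuple_of_labels, symmetric]
    by (intro sum.cong refl) (simp only: mult.assoc prod_label_weight)
qed

lemma diminishing_returns_if_k_submodular:
  assumes "k_submodular n k f"
  shows "diminishing_returns k {1..n} (\<lambda>\<sigma>. f (tuple_of_labels n k \<sigma>))"
  unfolding diminishing_returns_def
proof (intro allI impI)
  fix \<tau> i v j j' assume "i \<in> {1..n}" "v \<in> {1..n} - {i}" "j \<in> {1..k}" "j' \<in> {1..k}"
  then have ne: "v \<noteq> i" "j \<noteq> 0" "j' \<noteq> 0"
    by auto
  let ?S = "tuple_of_labels n k (\<tau>(v := 0, i := j))" and ?T = "tuple_of_labels n k (\<tau>(v := j', i := 0))"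
  have "kmeet ?S ?T = tuple_of_labels n k (\<tau>(v := 0, i := 0))"
    using ne by (intro ext) (auto simp: kmeet_def tuple_of_labels_def)
  moreover have "kjoin k ?S ?T = tuple_of_labels n k (\<tau>(v := j', i := j))"
  proof (intro ext set_eqI)
    fix l u
    show "u \<in> kjoin k ?S ?T l \<longleftrightarrow> u \<in> tuple_of_labels n k (\<tau>(v := j', i := j)) l"
      using ne by (cases "u = i"; cases "u = v") (auto simp: kjoin_def tuple_of_labels_def)
  qed
  moreover have "f (kmeet ?S ?T) + f (kjoin k ?S ?T) \<le> f ?S + f ?T"
    using assms tuple_of_labels_in_ktuples unfolding k_submodular_def by blast
  ultimately show "f (tuple_of_labels n k (\<tau>(v := j', i := j))) - f (tuple_of_labels n k (\<tau>(v := j', i := 0)))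
      \<le> f (tuple_of_labels n k (\<tau>(v := 0, i := j))) - f (tuple_of_labels n k (\<tau>(v := 0, i := 0)))"
    by simp
qed

theorem mainTheorem3:
  fixes n k :: nat and f :: "(nat \<Rightarrow> nat set) \<Rightarrow> real"
  assumes "k \<ge> 1"
    and "k_submodular n k f"
  defines "F \<equiv> multilinear_ext n k f"
  shows
    "(\<forall>x\<in>polytopeP n k. \<forall>d. (\<forall>i\<in>{1..n}. \<forall>j\<in>{1..k}. d i j \<ge> 0) \<longrightarrow>
        concave_on {t. line_pt x t d \<in> polytopeP n k} (\<lambda>t. F (line_pt x t d)))
   \<and> (\<forall>x\<in>polytopeP n k. \<forall>i1\<in>{1..n}. \<forall>i2\<in>{1..n}. \<forall>j1\<in>{1..k}. \<forall>j2\<in>{1..k}. i1 \<noteq> i2 \<longrightarrow>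
        (let d = (\<lambda>a b. basis_vec i1 j1 a b - basis_vec i2 j2 a b) in
         convex_on {t. line_pt x t d \<in> polytopeP n k} (\<lambda>t. F (line_pt x t d))))
   \<and> (\<forall>i\<in>{1..n}. \<forall>j\<in>{1..k}. \<forall>x\<in>polytopeP n k. \<forall>y\<in>polytopeP n k.
        (\<forall>i'\<in>{1..n}. i' \<noteq> i \<longrightarrow> (\<forall>j'\<in>{1..k}. x i' j' = y i' j')) \<longrightarrow>
        partial F i j x = partial F i j y)
   \<and> (\<forall>x\<in>polytopeP n k. \<forall>y\<in>polytopeP n k.
        (\<forall>i\<in>{1..n}. \<forall>j\<in>{1..k}. x i j \<le> y i j) \<longrightarrow>
        (\<forall>i\<in>{1..n}. \<forall>j\<in>{1..k}. partial F i j x \<ge> partial F i j y))"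
proof -
  let ?g = "\<lambda>\<sigma>. f (tuple_of_labels n k \<sigma>)" and ?P = "polytopeP n k"
  have F: "F = label_mean k {1..n} ?g"
    unfolding F_def by (rule multilinear_ext_eq_label_mean)
  have dr: "diminishing_returns k {1..n} ?g"
    using assms(2) by (rule diminishing_returns_if_k_submodular)
  have partial: "partial F i j x = marginal k {1..n} ?g i j x" if "i \<in> {1..n}" "j \<in> {1..k}" for i j x
    unfolding F using that by (intro partial_label_mean) auto
  have concave: "concave_on {t. line_pt x t d \<in> ?P} (\<lambda>t. F (line_pt x t d))"
    if "\<forall>i\<in>{1..n}. \<forall>j\<in>{1..k}. d i j \<ge> 0" for x d
    unfolding F using dr that by (rule concave_on_label_mean_line_pt)
  have convex: "convex_on {t. line_pt x t d \<in> ?P} (\<lambda>t. F (line_pt x t d))"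
    if "i1 \<in> {1..n}" "i2 \<in> {1..n}" "i1 \<noteq> i2" "j1 \<in> {1..k}" "j2 \<in> {1..k}"
      and "d = (\<lambda>a b. basis_vec i1 j1 a b - basis_vec i2 j2 a b)" for x d i1 i2 j1 j2
    unfolding F using dr that by (rule convex_on_label_mean_line_pt_exchange)
  have row_independent: "partial F i j x = partial F i j y"
    if "i \<in> {1..n}" "j \<in> {1..k}"
      and "\<forall>i'\<in>{1..n}. i' \<noteq> i \<longrightarrow> (\<forall>j'\<in>{1..k}. x i' j' = y i' j')" for i j x y
    using that by (simp add: partial marginal_cong)
  have antitone: "partial F i j y \<le> partial F i j x"
    if "x \<in> ?P" "y \<in> ?P" "\<forall>i\<in>{1..n}. \<forall>j\<in>{1..k}. x i j \<le> y i j"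
      and "i \<in> {1..n}" "j \<in> {1..k}" for x y i j
    using that dr by (simp add: partial marginal_antimono row_in_simplex_if_polytopeP)
  show ?thesis
    using concave convex row_independent antitone by (simp add: Let_def)
qed

end
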